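(* Let $d,k$ be positive integers and $C>0$. Let $z:\mathcal X\to\mathbb R^d$ be a fixed map from individual records to vectors with $\|z(x)\|_2\le C$ for all $x$ (for the remove/add relation $\sim_R$), respectively $\|z(x)\|_2\le C/2$ for all $x$ (for the substitution relation $\sim_S$). Consider the randomised algorithm which, on a dataset $D=(x_1,\dots,x_n)$, (1) draws a matrix $P\in\mathbb R^{d\times k}$ whose entries are independent $\mathcal N(0,1/k)$ random variables, (2) forms $\tilde z=\sum_{x\in D}P^{T}z(x)\in\mathbb R^k$, and (3) returns $\mathcal G(\tilde z)$, where $\mathcal G:\mathbb R^k\to\mathcal R$ is a Gaussian mechanism $\mathcal G(y)=y+\mathcal N(0,\sigma^2 I_k)$ that is $(\epsilon,\delta)$-DP for sensitivity-$\tilde C$ queries. Let $\tilde C>0$ and $\delta'>0$ satisfy $$\mathbb P\Big[\,\Gamma\big(K=\tfrac k2,\ \theta=\tfrac{2C^2}{k}\big)\le \tilde C^2\Big]\ \ge\ 1-\delta',$$ where $\Gamma(K,\theta)$ denotes a Gamma random variable with shape $K$ and scale $\theta$. Then the algorithm is $(\epsilon,\delta+\delta')$-differentially private (with respect to $\sim_R$, respectively $\sim_S$).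
   Context: A randomised mechanism $\mathcal M:\mathcal D\to\mathcal R$ is $(\epsilon,\delta)$-DP ($\epsilon>0$, $\delta\in[0,1]$) if for all neighbouring datasets $D\sim D'$ and all measurable $E\subseteq\mathcal R$, $P(\mathcal M(D)\in E)\le e^{\epsilon}P(\mathcal M(D')\in E)+\delta$. Two neighbouring relations are used: $D\sim_S D'$ (substitution) if $|D|=|D'|$ and they differ in exactly one element; $D\sim_R D'$ (remove/add) if one is obtained from the other by removing or adding a single element. A mechanism $\mathcal G:\mathbb R^k\to\mathcal R$ is said to be $(\epsilon,\delta)$-DP for sensitivity-$\tilde C$ queries if for all $y,y'\in\mathbb R^k$ with $\|y-y'\|_2\le\tilde C$ and all measurable $E$, $P(\mathcal G(y)\in E)\le e^{\epsilon}P(\mathcal G(y')\in E)+\delta$. *)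

theory Defs
  imports "HOL-Probability.Probability"
begin

definition dp :: "('x list \<Rightarrow> 'b measure) \<Rightarrow> ('x list \<Rightarrow> 'x list \<Rightarrow> bool) \<Rightarrow> real \<Rightarrow> real \<Rightarrow> bool" where
  "dp M rel eps delta \<longleftrightarrow>
     (\<forall>D D'. rel D D' \<longrightarrow>
        (\<forall>E \<in> sets (M D). measure (M D) E \<le> exp eps * measure (M D') E + delta))"

definition dp_sens :: "('a::real_normed_vector \<Rightarrow> 'b measure) \<Rightarrow> real \<Rightarrow> real \<Rightarrow> real \<Rightarrow> bool" where
  "dp_sens G eps delta Ct \<longleftrightarrow>
     (\<forall>y y'. norm (y - y') \<le> Ct \<longrightarrow>
        (\<forall>E \<in> sets (G y). measure (G y) E \<le> exp eps * measure (G y') E + delta))"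

definition subst_rel :: "'x list \<Rightarrow> 'x list \<Rightarrow> bool" where
  "subst_rel D D' \<longleftrightarrow> length D = length D' \<and> card {i. i < length D \<and> D ! i \<noteq> D' ! i} = 1"

definition remadd_rel :: "'x list \<Rightarrow> 'x list \<Rightarrow> bool" where
  "remadd_rel D D' \<longleftrightarrow>
     (\<exists>i < length D. D' = take i D @ drop (Suc i) D) \<or>
     (\<exists>i < length D'. D = take i D' @ drop (Suc i) D')"

definition gamma_density :: "real \<Rightarrow> real \<Rightarrow> real \<Rightarrow> real" where
  "gamma_density K theta x =
     (if x > 0 then x powr (K - 1) * exp (- x / theta) / (Gamma K * theta powr K) else 0)"

definition gamma_measure :: "real \<Rightarrow> real \<Rightarrow> real measure" where
  "gamma_measure K theta = density lborel (gamma_density K theta)"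

text \<open>Random d x k matrix with independent N(0, 1/k) entries; P(i,j) is the entry in row i, column j.\<close>
definition gauss_matrix :: "('d::finite \<times> 'k::finite \<Rightarrow> real) measure" where
  "gauss_matrix = PiM UNIV (\<lambda>_. density lborel (normal_density 0 (sqrt (1 / real CARD('k)))))"

definition gauss_mech :: "real \<Rightarrow> real^'k \<Rightarrow> (real^'k) measure" where
  "gauss_mech sg y =
     distr (PiM UNIV (\<lambda>_::'k. density lborel (normal_density 0 sg))) borel
       (\<lambda>w. y + (\<chi> j. w j))"

definition proj_sum :: "('d::finite \<times> 'k::finite \<Rightarrow> real) \<Rightarrow> ('x \<Rightarrow> real^'d) \<Rightarrow> 'x list \<Rightarrow> real^'k" where
  "proj_sum P z D = (\<Sum>x\<leftarrow>D. (\<chi> j. \<Sum>i\<in>UNIV. P (i, j) * z x $ i))"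

definition proj_alg :: "('x \<Rightarrow> real^'d::finite) \<Rightarrow> real \<Rightarrow> 'x list \<Rightarrow> (real^'k::finite) measure" where
  "proj_alg z sg D =
     Giry_Monad.bind (gauss_matrix :: ('d \<times> 'k \<Rightarrow> real) measure)
       (\<lambda>P. gauss_mech sg (proj_sum P z D))"

end

theory Submission
  imports Defs
begin

(* Conditionally on the random matrix P the algorithm is the Gaussian mechanism applied to
   P^T s(D), where s(D) is the sum of the z(x), and neighbouring datasets have |s(D) - s(D')| <= C.
   For a fixed vector v the k coordinates of P^T v are independent N(0, |v|^2/k), so |P^T v|^2
   has law Gamma(k/2, 2|v|^2/k); by scaling, |P^T v| <= Ct holds with at least the probability
   that Gamma(k/2, 2C^2/k) is <= Ct^2, i.e. at least 1 - delta'. On that event the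
   sensitivity-Ct guarantee of the mechanism applies, and averaging over P adds at most delta'. *)

section \<open>Gamma distributions\<close>

lemma nn_integral_Beta:
  assumes "a > 0" "b > (0::real)"
  shows "(\<integral>\<^sup>+t. ennreal (t powr (a-1) * (1-t) powr (b-1) * indicator {0<..<1} t) \<partial>lborel) = ennreal (Beta a b)"
proof -
  have "(\<integral>\<^sup>+t. ennreal (t powr (a-1) * (1-t) powr (b-1)) * indicator {0..1} t \<partial>lborel) = ennreal (Beta a b)"
    by (rule nn_integral_has_integral_lebesgue'[OF _ has_integral_Beta_real[OF assms]]) auto
  moreover have "ennreal (t powr (a-1) * (1-t) powr (b-1) * indicator {0<..<1} t) =
     ennreal (t powr (a-1) * (1-t) powr (b-1)) * indicator {0..1} t" for t
    by (cases "t = 0 \<or> t = 1") (auto simp: indicator_def)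
  ultimately show ?thesis by simp
qed

lemma nn_integral_Beta_scaled:
  assumes a: "a > 0" and b: "b > 0" and x: "x > (0::real)"
  shows "(\<integral>\<^sup>+y. ennreal ((x-y) powr (a-1) * y powr (b-1) * indicator {0<..<x} y) \<partial>lborel)
       = ennreal (x powr (a + b - 1) * Beta a b)"
proof -
  have integrand: "ennreal ((x - x*t) powr (a-1) * (x*t) powr (b-1) * indicator {0<..<x} (x*t))
      = ennreal (x powr (a + b - 2)) * ennreal (t powr (b-1) * (1-t) powr (a-1) * indicator {0<..<1} t)"
    for t :: real
  proof (cases "0 < t \<and> t < 1")
    case True
    have "(x - x*t) powr (a-1) = x powr (a-1) * (1-t) powr (a-1)"
      using True x by (simp add: powr_mult[symmetric] algebra_simps)
    moreover have "(x*t) powr (b-1) = x powr (b-1) * t powr (b-1)"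
      using True x by (simp add: powr_mult)
    moreover have "x powr (a-1) * x powr (b-1) = x powr (a + b - 2)"
      using x by (simp add: powr_add[symmetric])
    moreover have "x * t < x" using True x by simp
    ultimately show ?thesis
      using True x by (simp add: ennreal_mult'[symmetric] indicator_def algebra_simps)
  next
    case False
    then have "indicator {0<..<x} (x*t) = (0::real)" "indicator {0<..<1} t = (0::real)"
      using x by (auto simp: indicator_def mult_less_cancel_left1 zero_less_mult_iff)
    then show ?thesis by simp
  qed
  have "(\<integral>\<^sup>+y. ennreal ((x-y) powr (a-1) * y powr (b-1) * indicator {0<..<x} y) \<partial>lborel)
      = ennreal x * (\<integral>\<^sup>+t. ennreal ((x - x*t) powr (a-1) * (x*t) powr (b-1) * indicator {0<..<x} (x*t)) \<partial>lborel)"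
    using x by (subst nn_integral_real_affine[where c=x and t=0]) auto
  also have "\<dots> = ennreal x * (ennreal (x powr (a + b - 2)) * ennreal (Beta b a))"
    unfolding integrand by (subst nn_integral_cmult) (auto simp: nn_integral_Beta[OF b a])
  also have "\<dots> = ennreal (x powr (a + b - 1) * Beta a b)"
  proof -
    have "x powr (a + b - 1) = x powr 1 * x powr (a + b - 2)"
      by (subst powr_add[symmetric]) simp
    then have "x * x powr (a + b - 2) = x powr (a + b - 1)"
      using x by simp
    then show ?thesis
      using x a b by (simp add: ennreal_mult'[symmetric] Beta_commute mult.assoc[symmetric])
  qed
  finally show ?thesis .
qed

lemma gamma_density_nonneg[simp]: "K > 0 \<Longrightarrow> theta > 0 \<Longrightarrow> 0 \<le> gamma_density K theta x"
  by (auto simp: gamma_density_def)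

lemma borel_measurable_gamma_density[measurable]: "gamma_density K theta \<in> borel_measurable borel"
  unfolding gamma_density_def by measurable

lemma convolution_gamma_density:
  assumes a: "a > 0" and b: "b > 0" and th: "theta > 0"
  shows "(\<integral>\<^sup>+y. ennreal (gamma_density a theta (x - y)) * ennreal (gamma_density b theta y) \<partial>lborel)
     = ennreal (gamma_density (a + b) theta x)"
proof (cases "x > 0")
  case False
  then have vanish: "ennreal (gamma_density a theta (x - y)) * ennreal (gamma_density b theta y) = 0" for y
    by (auto simp: gamma_density_def)
  have "(\<integral>\<^sup>+y. ennreal (gamma_density a theta (x - y)) * ennreal (gamma_density b theta y) \<partial>lborel) = 0"
    by (simp add: vanish)
  then show ?thesis using False by (simp add: gamma_density_def)
next
  case x: True
  define c where "c = exp (- x / theta) / (Gamma a * theta powr a * (Gamma b * theta powr b))"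
  have c: "c \<ge> 0" using a b th by (simp add: c_def)
  have integrand: "ennreal (gamma_density a theta (x - y)) * ennreal (gamma_density b theta y)
      = ennreal c * ennreal ((x-y) powr (a-1) * y powr (b-1) * indicator {0<..<x} y)" for y
  proof (cases "0 < y \<and> y < x")
    case True
    have "exp (- (x - y) / theta) * exp (- y / theta) = exp (- x / theta)"
      by (simp add: mult_exp_exp diff_divide_distrib)
    then have "gamma_density a theta (x - y) * gamma_density b theta y
      = c * ((x-y) powr (a-1) * y powr (b-1))"
      using True a b th by (simp add: gamma_density_def c_def field_simps)
    then show ?thesis using True a b th c
      by (simp add: ennreal_mult'[symmetric] indicator_def)
  next
    case False
    then show ?thesis by (auto simp: gamma_density_def indicator_def)
  qed
  have "c * (x powr (a + b - 1) * Beta a b) = gamma_density (a + b) theta x"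
  proof -
    have "theta powr a * theta powr b = theta powr (a + b)"
      using th by (simp add: powr_add)
    moreover have "Gamma (a + b) \<noteq> 0" "Gamma a \<noteq> 0" "Gamma b \<noteq> 0"
      using a b by (simp_all add: less_imp_neq[symmetric])
    ultimately show ?thesis using x a b th
      by (simp add: gamma_density_def c_def Beta_def field_simps)
  qed
  then show ?thesis
    unfolding integrand using a b c x
    by (subst nn_integral_cmult) (auto simp: nn_integral_Beta_scaled ennreal_mult'[symmetric])
qed

lemma (in prob_space) distributed_sum_gamma:
  assumes "finite I" "I \<noteq> {}" "theta > 0"
    and "\<And>i. i \<in> I \<Longrightarrow> K i > 0"
    and "\<And>i. i \<in> I \<Longrightarrow> distributed M lborel (X i) (gamma_density (K i) theta)"
    and "indep_vars (\<lambda>i. borel) X I"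
  shows "distributed M lborel (\<lambda>x. \<Sum>i\<in>I. X i x) (gamma_density (\<Sum>i\<in>I. K i) theta)"
  using assms
proof (induct I rule: finite_ne_induct)
  case (singleton i) then show ?case by auto
next
  case (insert i I)
  have indep: "indep_var borel (X i) borel (\<lambda>x. \<Sum>i\<in>I. X i x)"
    using insert by (intro indep_vars_sum) auto
  have IH: "distributed M lborel (\<lambda>x. \<Sum>i\<in>I. X i x) (gamma_density (\<Sum>i\<in>I. K i) theta)"
    using insert by (intro insert.hyps(4)) (auto intro: indep_vars_subset)
  have "(\<Sum>i\<in>I. K i) > 0" using insert by (intro sum_pos) auto
  then have "distributed M lborel (\<lambda>x. X i x + (\<Sum>i\<in>I. X i x)) (gamma_density (K i + (\<Sum>i\<in>I. K i)) theta)"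
    using distributed_convolution[OF indep insert.prems(3)[of i] IH] insert
    by (simp add: convolution_gamma_density)
  then show ?case using insert by simp
qed

section \<open>Squares of centred normal variables\<close>

lemma nn_integral_substitution_inj_on:
  fixes f g g' :: "real \<Rightarrow> real"
  assumes S: "S \<in> sets lebesgue"
    and der: "\<And>x. x \<in> S \<Longrightarrow> (g has_field_derivative g' x) (at x within S)"
    and inj: "inj_on g S"
    and f0: "\<And>y. 0 \<le> f y"
    and int: "(\<lambda>x. \<bar>g' x\<bar> * f (g x)) absolutely_integrable_on S"
  shows "(\<integral>\<^sup>+x. ennreal (\<bar>g' x\<bar> * f (g x)) * indicator S x \<partial>lborel)
       = (\<integral>\<^sup>+y. ennreal (f y) * indicator (g ` S) y \<partial>lborel)"
proof -
  define b where "b = integral S (\<lambda>x. \<bar>g' x\<bar> * f (g x))"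
  have image: "f absolutely_integrable_on g ` S \<and> integral (g ` S) f = b"
    using has_absolute_integral_change_of_variables_1'[OF S der inj] int b_def by blast
  have "((\<lambda>x. \<bar>g' x\<bar> * f (g x)) has_integral b) S"
    unfolding b_def using set_lebesgue_integral_eq_integral(1)[OF int] by (rule integrable_integral)
  then have "(\<integral>\<^sup>+x. ennreal (\<bar>g' x\<bar> * f (g x)) * indicator S x \<partial>lborel) = ennreal b"
    by (rule nn_integral_has_integral_lebesgue'[rotated]) (simp add: f0)
  moreover have "(f has_integral b) (g ` S)"
    using image set_lebesgue_integral_eq_integral(1) integrable_integral by metis
  then have "(\<integral>\<^sup>+y. ennreal (f y) * indicator (g ` S) y \<partial>lborel) = ennreal b"
    by (rule nn_integral_has_integral_lebesgue'[rotated]) (simp add: f0)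
  ultimately show ?thesis by simp
qed

lemma normal_density_eq_gamma_density_power2:
  assumes s: "s > 0" and x: "x \<noteq> 0"
  shows "normal_density 0 s x = \<bar>2 * x\<bar> * (gamma_density (1/2) (2 * s\<^sup>2) (x\<^sup>2) / 2)"
proof -
  have x2: "x\<^sup>2 > 0" using x by simp
  have "(x\<^sup>2) powr (1/2 - 1) = 1 / \<bar>x\<bar>"
    using x2 by (simp add: powr_minus_divide powr_half_sqrt)
  moreover have "(2 * s\<^sup>2) powr (1/2) = sqrt 2 * s"
    using s by (simp add: powr_half_sqrt real_sqrt_mult)
  moreover have "sqrt (2 * pi * s\<^sup>2) = sqrt 2 * sqrt pi * s"
    using s by (simp add: real_sqrt_mult)
  ultimately show ?thesis using x2 x s
    by (simp add: gamma_density_def normal_density_def Gamma_one_half_real field_simps)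
qed

lemma power2_image_greaterThan_0: "(\<lambda>x::real. x\<^sup>2) ` {0<..} = {0<..}"
proof
  show "{0<..} \<subseteq> (\<lambda>x::real. x\<^sup>2) ` {0<..}"
  proof
    fix y :: real assume "y \<in> {0<..}"
    then have "y = (sqrt y)\<^sup>2" "sqrt y \<in> {0<..}" by auto
    then show "y \<in> (\<lambda>x. x\<^sup>2) ` {0<..}" by blast
  qed
qed auto

lemma power2_image_lessThan_0: "(\<lambda>x::real. x\<^sup>2) ` {..<0} = {0<..}"
proof
  show "{0<..} \<subseteq> (\<lambda>x::real. x\<^sup>2) ` {..<0}"
  proof
    fix y :: real assume "y \<in> {0<..}"
    then have "y = (- sqrt y)\<^sup>2" "- sqrt y \<in> {..<0}" by auto
    then show "y \<in> (\<lambda>x. x\<^sup>2) ` {..<0}" by blast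
  qed
qed auto

(* Squaring maps either half-line bijectively onto {0<..}; no indicator is needed on the right
   because the Gamma density vanishes on {..0}. *)
lemma nn_integral_normal_density_power2_half_line:
  assumes s: "s > 0" and A: "A \<in> sets borel" and S: "S = {0<..} \<or> S = {..<0}"
  shows "(\<integral>\<^sup>+x. ennreal (normal_density 0 s x * indicator A (x\<^sup>2)) * indicator S x \<partial>lborel)
       = (\<integral>\<^sup>+y. ennreal (gamma_density (1/2) (2 * s\<^sup>2) y * indicator A y / 2) \<partial>lborel)"
proof -
  note A[measurable]
  define f where "f y = gamma_density (1/2) (2 * s\<^sup>2) y * indicator A y / 2" for y :: real
  define F where "F x = normal_density 0 s x * indicator A (x\<^sup>2)" for x :: real
  have F_measurable[measurable]: "F \<in> borel_measurable borel"
    unfolding F_def by measurable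
  have F_eq: "F x = \<bar>2 * x\<bar> * f (x\<^sup>2)" if "x \<in> S" for x
    using normal_density_eq_gamma_density_power2[OF s, of x] S that
    by (auto simp: f_def F_def indicator_def)
  have "integrable lborel F"
    using s unfolding F_def
    by (intro Bochner_Integration.integrable_bound[OF integrable_normal_density]) (auto simp: indicator_def)
  then have "set_integrable lborel S F"
    unfolding set_integrable_def using S by (intro integrable_mult_indicator) auto
  then have "F absolutely_integrable_on S"
    unfolding set_integrable_def by (subst integrable_completion) auto
  then have int: "(\<lambda>x. \<bar>2 * x\<bar> * f (x\<^sup>2)) absolutely_integrable_on S"
    by (rule set_integrable_cong[THEN iffD1, rotated -1]) (simp_all add: F_eq)
  have inj: "inj_on (\<lambda>x::real. x\<^sup>2) S"
    using S by (auto simp: inj_on_def power2_eq_iff)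
  have der: "((\<lambda>x. x\<^sup>2) has_field_derivative 2 * x) (at x within S)" for x :: real
    by (auto intro!: derivative_eq_intros)
  have f0: "0 \<le> f y" for y using s by (simp add: f_def)
  have "(\<integral>\<^sup>+x. ennreal (F x) * indicator S x \<partial>lborel)
      = (\<integral>\<^sup>+x. ennreal (\<bar>2 * x\<bar> * f (x\<^sup>2)) * indicator S x \<partial>lborel)"
    by (intro nn_integral_cong) (simp add: F_eq indicator_def)
  also have "\<dots> = (\<integral>\<^sup>+y. ennreal (f y) * indicator {0<..} y \<partial>lborel)"
    using nn_integral_substitution_inj_on[OF _ der inj f0 int] S
    by (auto simp: power2_image_greaterThan_0 power2_image_lessThan_0)
  also have "\<dots> = (\<integral>\<^sup>+y. ennreal (f y) \<partial>lborel)"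
    by (intro nn_integral_cong) (auto simp: f_def gamma_density_def indicator_def)
  finally show ?thesis unfolding F_def f_def .
qed

lemma distr_power2_normal_density:
  assumes s: "s > 0"
  shows "distr (density lborel (normal_density 0 s)) lborel (\<lambda>x. x\<^sup>2)
       = density lborel (gamma_density (1/2) (2 * s\<^sup>2))"
proof (rule measure_eqI)
  fix A assume "A \<in> sets (distr (density lborel (normal_density 0 s)) lborel (\<lambda>x. x\<^sup>2))"
  then have A[measurable]: "A \<in> sets borel" by simp
  define F where "F x = normal_density 0 s x * indicator A (x\<^sup>2)" for x :: real
  have F_measurable[measurable]: "F \<in> borel_measurable borel"
    unfolding F_def by measurable
  have "emeasure (distr (density lborel (normal_density 0 s)) lborel (\<lambda>x. x\<^sup>2)) A
      = emeasure (density lborel (normal_density 0 s)) ((\<lambda>x. x\<^sup>2) -` A)"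
    by (subst emeasure_distr) auto
  also have "\<dots> = (\<integral>\<^sup>+x. ennreal (F x) \<partial>lborel)"
    using measurable_sets_borel[of "\<lambda>x::real. x\<^sup>2" borel A]
    by (subst emeasure_density) (auto intro!: nn_integral_cong simp: F_def indicator_def)
  also have "\<dots> = (\<integral>\<^sup>+x. ennreal (F x) * indicator {0<..} x + ennreal (F x) * indicator {..<0} x \<partial>lborel)"
    using AE_lborel_singleton[of 0]
    by (intro nn_integral_cong_AE) (auto elim!: eventually_mono simp: indicator_def)
  also have "\<dots> = (\<integral>\<^sup>+x. ennreal (F x) * indicator {0<..} x \<partial>lborel) + (\<integral>\<^sup>+x. ennreal (F x) * indicator {..<0} x \<partial>lborel)"
    by (rule nn_integral_add) auto
  also have "\<dots> = 2 * (\<integral>\<^sup>+y. ennreal (gamma_density (1/2) (2 * s\<^sup>2) y * indicator A y / 2) \<partial>lborel)"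
    using nn_integral_normal_density_power2_half_line[OF s A, of "{0<..}"]
      nn_integral_normal_density_power2_half_line[OF s A, of "{..<0}"]
    unfolding F_def by (simp only: mult_2 simp_thms)
  also have "\<dots> = (\<integral>\<^sup>+y. ennreal (gamma_density (1/2) (2 * s\<^sup>2) y) * indicator A y \<partial>lborel)"
  proof (subst nn_integral_cmult[symmetric], simp, intro nn_integral_cong)
    fix y :: real
    have "2 * ennreal (gamma_density (1/2) (2 * s\<^sup>2) y / 2)
        = ennreal (2 * (gamma_density (1/2) (2 * s\<^sup>2) y / 2))"
      using ennreal_mult'[of 2 "gamma_density (1/2) (2 * s\<^sup>2) y / 2"] by simp
    then show "2 * ennreal (gamma_density (1/2) (2 * s\<^sup>2) y * indicator A y / 2)
        = ennreal (gamma_density (1/2) (2 * s\<^sup>2) y) * indicator A y"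
      by (simp add: indicator_def)
  qed
  also have "\<dots> = emeasure (density lborel (gamma_density (1/2) (2 * s\<^sup>2))) A"
    by (simp add: emeasure_density)
  finally show "emeasure (distr (density lborel (normal_density 0 s)) lborel (\<lambda>x. x\<^sup>2)) A
      = emeasure (density lborel (gamma_density (1/2) (2 * s\<^sup>2))) A" .
qed simp

lemma (in prob_space) distributed_power2_normal:
  assumes s: "s > 0" and X: "distributed M lborel X (normal_density 0 s)"
  shows "distributed M lborel (\<lambda>x. (X x)\<^sup>2) (gamma_density (1/2) (2 * s\<^sup>2))"
proof -
  have [measurable]: "X \<in> borel_measurable M"
    using X by (simp add: distributed_def)
  have "distr M lborel (\<lambda>x. (X x)\<^sup>2) = distr (distr M lborel X) lborel (\<lambda>x. x\<^sup>2)"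
    by (subst distr_distr) (auto simp: comp_def)
  also have "\<dots> = density lborel (gamma_density (1/2) (2 * s\<^sup>2))"
    using X distr_power2_normal_density[OF s] by (simp add: distributed_def)
  finally show ?thesis
    unfolding distributed_def by simp
qed

section \<open>Gaussian random matrices\<close>

lemma borel_measurable_vec_lambda:
  assumes "\<And>j. (\<lambda>x. f x j) \<in> borel_measurable M"
  shows "(\<lambda>x. (\<chi> j. f x j) :: real^'k::finite) \<in> borel_measurable M"
proof (subst borel_measurable_euclidean_space, intro ballI)
  fix b :: "real^'k" assume "b \<in> Basis"
  then obtain j where b: "b = axis j 1" by (auto simp: Basis_vec_def)
  have "(\<lambda>x. (\<chi> j. f x j) \<bullet> b) = (\<lambda>x. f x j)"
    unfolding b by (simp add: cart_eq_inner_axis[symmetric])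
  then show "(\<lambda>x. (\<chi> j. f x j) \<bullet> b) \<in> borel_measurable M" using assms by simp
qed

definition transpose_apply :: "('d::finite \<times> 'k::finite \<Rightarrow> real) \<Rightarrow> real^'d \<Rightarrow> real^'k" where
  "transpose_apply P v = (\<chi> j. \<Sum>i\<in>UNIV. P (i, j) * v $ i)"

lemma linear_transpose_apply: "linear (transpose_apply P)"
  by (rule linearI)
     (simp_all add: transpose_apply_def vec_eq_iff sum.distrib distrib_left sum_distrib_left algebra_simps)

lemma proj_sum_eq_transpose_apply: "proj_sum P z D = transpose_apply P (\<Sum>x\<leftarrow>D. z x)"
  by (induction D)
     (simp_all add: proj_sum_def linear_add[OF linear_transpose_apply] linear_0[OF linear_transpose_apply],
      simp add: transpose_apply_def)

lemma prob_space_gauss_matrix: "prob_space gauss_matrix"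
  unfolding gauss_matrix_def by (auto intro!: prob_space_PiM prob_space_normal_density)

lemma space_gauss_matrix[simp]: "space gauss_matrix = UNIV"
  unfolding gauss_matrix_def by (simp add: space_PiM)

lemma distributed_gauss_matrix_entry:
  "distributed (gauss_matrix :: ('d::finite \<times> 'k::finite \<Rightarrow> real) measure) lborel (\<lambda>P. P p)
      (normal_density 0 (sqrt (1 / real CARD('k))))"
  unfolding distributed_def
proof (intro conjI)
  let ?N = "\<lambda>_::('d \<times> 'k). density lborel (normal_density 0 (sqrt (1 / real CARD('k))))"
  have "distr (gauss_matrix :: ('d \<times> 'k \<Rightarrow> real) measure) lborel (\<lambda>P. P p)
      = distr (PiM UNIV ?N) (?N p) (\<lambda>P. P p)"
    unfolding gauss_matrix_def by (rule distr_cong) auto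
  also have "\<dots> = ?N p"
    by (rule distr_PiM_component) (auto intro: prob_space_normal_density)
  finally show "distr (gauss_matrix :: ('d \<times> 'k \<Rightarrow> real) measure) lborel (\<lambda>P. P p)
      = density lborel (\<lambda>x. ennreal (normal_density 0 (sqrt (1 / real CARD('k))) x))" .
  have "(\<lambda>P. P p) \<in> measurable (PiM UNIV ?N) (?N p)"
    by (rule measurable_component_singleton) simp
  moreover have "measurable (PiM UNIV ?N) (?N p) = measurable (PiM UNIV ?N) lborel"
    by (rule measurable_cong_sets) auto
  ultimately show "(\<lambda>P. P p) \<in> measurable (gauss_matrix :: ('d \<times> 'k \<Rightarrow> real) measure) lborel"
    unfolding gauss_matrix_def by simp
qed simp

lemma borel_measurable_gauss_matrix_entry[measurable]:
  "(\<lambda>P. P p) \<in> borel_measurable (gauss_matrix :: ('d::finite \<times> 'k::finite \<Rightarrow> real) measure)"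
  using distributed_gauss_matrix_entry[of p] unfolding distributed_def by simp

lemma borel_measurable_transpose_apply[measurable]:
  "(\<lambda>P. transpose_apply P v) \<in> borel_measurable (gauss_matrix :: ('d::finite \<times> 'k::finite \<Rightarrow> real) measure)"
  unfolding transpose_apply_def by (rule borel_measurable_vec_lambda) measurable

lemma indep_vars_gauss_matrix_entries:
  "prob_space.indep_vars (gauss_matrix :: ('d::finite \<times> 'k::finite \<Rightarrow> real) measure)
     (\<lambda>_. borel) (\<lambda>p P. P p) UNIV"
proof -
  let ?M = "gauss_matrix :: ('d \<times> 'k \<Rightarrow> real) measure"
  let ?N = "\<lambda>_::('d \<times> 'k). density lborel (normal_density 0 (sqrt (1 / real CARD('k))))"
  interpret prob_space ?M by (rule prob_space_gauss_matrix)
  have "sets (PiM UNIV (\<lambda>_::('d\<times>'k). borel)) = sets ?M"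
    unfolding gauss_matrix_def by (rule sets_PiM_cong) auto
  then have "distr ?M (PiM UNIV (\<lambda>_. borel)) (\<lambda>x. \<lambda>i\<in>UNIV. x i) = ?M"
    using distr_id2[of "PiM UNIV (\<lambda>_::('d\<times>'k). borel)" ?M] by (simp add: restrict_UNIV)
  moreover have "distr ?M borel (\<lambda>x. x p) = ?N p" for p
    using distributed_gauss_matrix_entry[of p] unfolding distributed_def
    by (metis distr_cong sets_lborel)
  then have "PiM UNIV (\<lambda>i. distr ?M borel (\<lambda>x. x i)) = ?M"
    unfolding gauss_matrix_def by (simp cong: PiM_cong)
  ultimately show ?thesis
    by (subst indep_vars_iff_distr_eq_PiM) auto
qed

lemma distributed_transpose_apply_component:
  fixes w :: "real^'d::finite" and j :: "'k::finite"
  assumes w: "w \<noteq> 0"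
  shows "distributed (gauss_matrix :: ('d \<times> 'k \<Rightarrow> real) measure) lborel
           (\<lambda>P. transpose_apply P w $ j) (normal_density 0 (norm w / sqrt (real CARD('k))))"
proof -
  let ?M = "gauss_matrix :: ('d \<times> 'k \<Rightarrow> real) measure"
  define s where "s = sqrt (1 / real CARD('k))"
  have s: "s > 0" by (simp add: s_def)
  interpret prob_space ?M by (rule prob_space_gauss_matrix)
  define J where "J = {i. w $ i \<noteq> 0} \<times> {j}"
  have "J \<noteq> {}" using w by (auto simp: J_def vec_eq_iff)
  have sum_J: "(\<Sum>p\<in>J. g p) = (\<Sum>i | w $ i \<noteq> 0. g (i, j))" for g :: "'d \<times> 'k \<Rightarrow> real"
  proof -
    have "J = (\<lambda>i. (i, j)) ` {i. w $ i \<noteq> 0}" by (auto simp: J_def)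
    then show ?thesis by (simp add: sum.reindex inj_on_def)
  qed
  define X where "X p P = w $ fst p * P p" for p and P :: "'d \<times> 'k \<Rightarrow> real"
  have indep: "indep_vars (\<lambda>_. borel) X J"
    unfolding X_def
    by (rule indep_vars_compose2[where X="\<lambda>p P. P p", OF indep_vars_subset[OF indep_vars_gauss_matrix_entries]])
       auto
  have "distributed ?M lborel (X p) (normal_density 0 (\<bar>w $ fst p\<bar> * s))" if "p \<in> J" for p
    using that normal_density_affine[OF distributed_gauss_matrix_entry[of p], of "w $ fst p" 0]
    unfolding X_def by (auto simp: s_def J_def)
  then have "distributed ?M lborel (\<lambda>P. \<Sum>p\<in>J. X p P)
      (normal_density (\<Sum>p\<in>J. 0) (sqrt (\<Sum>p\<in>J. (\<bar>w $ fst p\<bar> * s)\<^sup>2)))"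
    using \<open>J \<noteq> {}\<close> indep s by (intro sum_indep_normal) (auto simp: J_def)
  moreover have "(\<Sum>p\<in>J. X p P) = transpose_apply P w $ j" for P
    unfolding transpose_apply_def X_def sum_J
    by (auto simp: mult.commute intro: sum.mono_neutral_left)
  moreover have "sqrt (\<Sum>p\<in>J. (\<bar>w $ fst p\<bar> * s)\<^sup>2) = norm w / sqrt (real CARD('k))"
  proof -
    have "(\<Sum>p\<in>J. (\<bar>w $ fst p\<bar> * s)\<^sup>2) = s\<^sup>2 * (\<Sum>i\<in>UNIV. (w $ i)\<^sup>2)"
      unfolding sum_J
      by (simp add: power_mult_distrib sum_distrib_left mult.commute sum.mono_neutral_left)
    then show ?thesis
      using s by (simp add: norm_vec_def L2_set_def real_sqrt_mult s_def real_sqrt_divide)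
  qed
  ultimately show ?thesis by simp
qed

lemma indep_vars_transpose_apply_components:
  "prob_space.indep_vars (gauss_matrix :: ('d::finite \<times> 'k::finite \<Rightarrow> real) measure) (\<lambda>_. borel)
     (\<lambda>j P. transpose_apply P w $ j) UNIV"
proof -
  let ?M = "gauss_matrix :: ('d \<times> 'k \<Rightarrow> real) measure"
  interpret prob_space ?M by (rule prob_space_gauss_matrix)
  have "indep_vars (\<lambda>j. PiM (UNIV \<times> {j}) (\<lambda>_. borel)) (\<lambda>j P. restrict P (UNIV \<times> {j})) (UNIV :: 'k set)"
    by (rule indep_vars_restrict[OF indep_vars_gauss_matrix_entries]) (auto simp: disjoint_family_on_def)
  moreover have "(\<lambda>f. \<Sum>i\<in>UNIV. f (i, j) * w $ i)
      \<in> borel_measurable (PiM (UNIV \<times> {j}) (\<lambda>_::('d \<times> 'k). (borel :: real measure)))" for j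
  proof -
    have [measurable]: "(\<lambda>f. f (i, j)) \<in> borel_measurable (PiM (UNIV \<times> {j}) (\<lambda>_::('d \<times> 'k). (borel :: real measure)))" for i
      by (rule measurable_component_singleton) auto
    show ?thesis by measurable
  qed
  ultimately have "indep_vars (\<lambda>_. borel)
      (\<lambda>j P. (\<lambda>f. \<Sum>i\<in>UNIV. f (i, j) * w $ i) (restrict P (UNIV \<times> {j}))) UNIV"
    by (rule indep_vars_compose2)
  then show ?thesis by (simp add: transpose_apply_def)
qed

lemma distributed_power2_norm_transpose_apply:
  fixes w :: "real^'d::finite"
  assumes w: "w \<noteq> 0"
  shows "distributed (gauss_matrix :: ('d \<times> 'k::finite \<Rightarrow> real) measure) lborel
     (\<lambda>P. (norm (transpose_apply P w))\<^sup>2)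
     (gamma_density (real CARD('k) / 2) (2 * (norm w)\<^sup>2 / real CARD('k)))"
proof -
  let ?M = "gauss_matrix :: ('d \<times> 'k \<Rightarrow> real) measure"
  interpret prob_space ?M by (rule prob_space_gauss_matrix)
  define s where "s = norm w / sqrt (real CARD('k))"
  have s: "s > 0" using w by (simp add: s_def)
  have "distributed ?M lborel (\<lambda>P. \<Sum>j\<in>UNIV. (transpose_apply P w $ j)\<^sup>2)
      (gamma_density (\<Sum>j\<in>(UNIV::'k set). 1/2) (2 * s\<^sup>2))"
  proof (rule distributed_sum_gamma)
    show "distributed ?M lborel (\<lambda>P. (transpose_apply P w $ j)\<^sup>2) (gamma_density (1/2) (2 * s\<^sup>2))" for j
      using distributed_power2_normal[OF s, of "\<lambda>P. transpose_apply P w $ j"]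
        distributed_transpose_apply_component[OF w, of j]
      unfolding s_def by blast
    show "indep_vars (\<lambda>_. borel) (\<lambda>j P. (transpose_apply P w $ j)\<^sup>2) UNIV"
      by (rule indep_vars_compose2[OF indep_vars_transpose_apply_components]) simp
  qed (use s in simp_all)
  moreover have "2 * s\<^sup>2 = 2 * (norm w)\<^sup>2 / real CARD('k)"
    by (simp add: s_def power_divide)
  moreover have "(\<Sum>j\<in>UNIV. (transpose_apply P w $ j)\<^sup>2) = (norm (transpose_apply P w :: real^'k))\<^sup>2" for P
    by (simp add: norm_vec_def L2_set_def sum_nonneg)
  ultimately show ?thesis by simp
qed

lemma exists_norm_eq_dominates_transpose_apply:
  fixes v :: "real^'d::finite"
  assumes C: "C > 0" and v: "norm v \<le> C"
  shows "\<exists>w. norm w = C \<and> (\<forall>P :: 'd \<times> 'k::finite \<Rightarrow> real. norm (transpose_apply P v) \<le> norm (transpose_apply P w))"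
proof (cases "v = 0")
  case True
  obtain w :: "real^'d" where "norm w = C" using C vector_choose_size[of C] by (meson less_imp_le)
  then show ?thesis using True by (auto simp: linear_0[OF linear_transpose_apply])
next
  case False
  define w where "w = (C / norm v) *\<^sub>R v"
  have "norm (transpose_apply P v) \<le> norm (transpose_apply P w)" for P :: "'d \<times> 'k \<Rightarrow> real"
  proof -
    have "norm (transpose_apply P v) = (norm v / C) * norm (transpose_apply P w)"
      using False C by (simp add: w_def linear_scale[OF linear_transpose_apply])
    also have "\<dots> \<le> norm (transpose_apply P w)"
      using v C by (intro mult_left_le_one_le) auto
    finally show ?thesis .
  qed
  moreover have "norm w = C" using False C by (simp add: w_def)
  ultimately show ?thesis by blast
qed

lemma gamma_measure_le_measure_norm_transpose_apply:
  fixes v :: "real^'d::finite"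
  assumes C: "C > 0" and Ct: "Ct \<ge> 0" and v: "norm v \<le> C"
  shows "measure (gamma_measure (real CARD('k) / 2) (2 * C\<^sup>2 / real CARD('k))) {..Ct\<^sup>2}
       \<le> measure (gauss_matrix :: ('d \<times> 'k::finite \<Rightarrow> real) measure)
           {P. norm (transpose_apply P v) \<le> Ct}"
proof -
  let ?M = "gauss_matrix :: ('d \<times> 'k \<Rightarrow> real) measure"
  let ?good = "\<lambda>u. {P :: 'd \<times> 'k \<Rightarrow> real. norm (transpose_apply P u) \<le> Ct}"
  interpret prob_space ?M by (rule prob_space_gauss_matrix)
  obtain w :: "real^'d" where w: "norm w = C"
    and dominates: "\<And>P :: 'd \<times> 'k \<Rightarrow> real. norm (transpose_apply P v) \<le> norm (transpose_apply P w)"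
    using exists_norm_eq_dominates_transpose_apply[OF C v] by blast
  have sub: "?good w \<subseteq> ?good v"
    using dominates by (auto intro: order_trans)
  have "w \<noteq> 0" using w C by auto
  have "distributed ?M lborel (\<lambda>P. (norm (transpose_apply P w))\<^sup>2)
      (gamma_density (real CARD('k) / 2) (2 * C\<^sup>2 / real CARD('k)))"
    using distributed_power2_norm_transpose_apply[OF \<open>w \<noteq> 0\<close>, where 'k='k] unfolding w .
  then have "distr ?M lborel (\<lambda>P. (norm (transpose_apply P w))\<^sup>2)
      = gamma_measure (real CARD('k) / 2) (2 * C\<^sup>2 / real CARD('k))"
    by (simp add: distributed_def gamma_measure_def)
  moreover have "?good w = (\<lambda>P. (norm (transpose_apply P w))\<^sup>2) -` {..Ct\<^sup>2} \<inter> space ?M"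
    using Ct by (auto simp: power2_le_iff_abs_le)
  ultimately have "measure (gamma_measure (real CARD('k) / 2) (2 * C\<^sup>2 / real CARD('k))) {..Ct\<^sup>2}
      = measure ?M (?good w)"
    using measure_distr[of "\<lambda>P. (norm (transpose_apply P w))\<^sup>2" ?M lborel "{..Ct\<^sup>2}"] by simp
  also have "\<dots> \<le> measure ?M (?good v)"
  proof (rule finite_measure_mono[OF sub])
    have "?good v = (\<lambda>P. norm (transpose_apply P v)) -` {..Ct} \<inter> space ?M" by auto
    also have "\<dots> \<in> events" by measurable
    finally show "?good v \<in> events" .
  qed
  finally show ?thesis .
qed

section \<open>Privacy of the projected mechanism\<close>

lemma (in prob_space) measure_bind_le_mixture:
  assumes N: "N \<in> measurable M (subprob_algebra B)" and N': "N' \<in> measurable M (subprob_algebra B)"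
    and E: "E \<in> sets B" and G: "G \<in> events" and c: "0 \<le> c" and delta: "0 \<le> delta"
    and close: "\<And>x. x \<in> G \<Longrightarrow> measure (N x) E \<le> c * measure (N' x) E + delta"
  shows "measure (M \<bind> N) E \<le> c * measure (M \<bind> N') E + delta + prob (space M - G)"
proof -
  have [measurable]: "(\<lambda>x. measure (N x) E) \<in> borel_measurable M" "(\<lambda>x. measure (N' x) E) \<in> borel_measurable M"
    using E by (auto intro: measurable_compose[OF N] measurable_compose[OF N'])
  have le_1: "measure (K x) E \<le> 1" if "K \<in> measurable M (subprob_algebra B)" "x \<in> space M" for K x
    using measurable_space[OF that] by (auto simp: space_subprob_algebra intro: subprob_space.subprob_measure_le_1)
  have integrable: "integrable M (\<lambda>x. measure (K x) E)" if "K \<in> measurable M (subprob_algebra B)" for K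
    using that le_1[OF that] E
    by (intro integrable_const_bound[where B=1]) (auto intro: measurable_compose[OF that])
  have pointwise: "measure (N x) E \<le> c * measure (N' x) E + delta + indicator (space M - G) x"
    if "x \<in> space M" for x
  proof (cases "x \<in> G")
    case True
    then show ?thesis using close by simp
  next
    case False
    then have "measure (N x) E \<le> 0 + 0 + indicator (space M - G) x"
      using le_1[OF N that] that by simp
    also have "\<dots> \<le> c * measure (N' x) E + delta + indicator (space M - G) x"
      using c delta by (intro add_mono mult_nonneg_nonneg) auto
    finally show ?thesis .
  qed
  have "measure (M \<bind> N) E = (\<integral>x. measure (N x) E \<partial>M)"
    by (rule measure_bind[OF N E])
  also have "\<dots> \<le> (\<integral>x. c * measure (N' x) E + delta + indicator (space M - G) x \<partial>M)"
    using pointwise G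
    by (intro integral_mono integrable[OF N] Bochner_Integration.integrable_add integrable_mult_right
        integrable[OF N'] integrable_real_indicator) (auto simp: less_top[symmetric])
  also have "\<dots> = c * (\<integral>x. measure (N' x) E \<partial>M) + delta + prob (space M - G)"
    using G integrable[OF N']
    by (subst Bochner_Integration.integral_add)
       (auto intro!: Bochner_Integration.integrable_add integrable_real_indicator
             simp: less_top[symmetric] prob_space)
  also have "(\<integral>x. measure (N' x) E \<partial>M) = measure (M \<bind> N') E"
    by (rule measure_bind[OF N' E, symmetric])
  finally show ?thesis .
qed

lemma borel_measurable_vec_lambda_PiM:
  "(\<lambda>w. vec_lambda w :: real^'k::finite) \<in> borel_measurable (PiM UNIV (\<lambda>_::'k. density lborel f))"
proof (rule borel_measurable_vec_lambda)
  fix j :: 'k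
  have "(\<lambda>w. w j) \<in> measurable (PiM UNIV (\<lambda>_::'k. density lborel f)) (density lborel f)"
    by (rule measurable_component_singleton) simp
  then show "(\<lambda>w. w j) \<in> borel_measurable (PiM UNIV (\<lambda>_::'k. density lborel f))"
    by (simp cong: measurable_cong_sets)
qed

lemma sets_gauss_mech[simp]: "sets (gauss_mech sg y) = sets borel"
  by (simp add: gauss_mech_def)

lemma measurable_gauss_mech:
  assumes sg: "sg > 0"
  shows "(gauss_mech sg :: real^'k::finite \<Rightarrow> _) \<in> measurable borel (subprob_algebra borel)"
proof -
  let ?W = "PiM UNIV (\<lambda>_::'k. density lborel (normal_density 0 sg))"
  have "(\<lambda>y. distr ?W borel (\<lambda>w. y + (\<chi> j. w j))) \<in> measurable (borel :: (real^'k) measure) (subprob_algebra borel)"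
  proof (rule measurable_distr2[where M="?W"])
    have [measurable]: "(\<lambda>w. (\<chi> j. w j) :: real^'k) \<in> borel_measurable ?W"
      by (rule borel_measurable_vec_lambda_PiM)
    show "(\<lambda>(y, w). y + (\<chi> j. w j)) \<in> measurable (borel \<Otimes>\<^sub>M ?W) (borel :: (real^'k) measure)"
      by measurable
    have "prob_space ?W"
      using sg by (intro prob_space_PiM prob_space_normal_density)
    then show "(\<lambda>x. ?W) \<in> measurable borel (subprob_algebra ?W)"
      by (auto simp: space_subprob_algebra intro!: measurable_const prob_space_imp_subprob_space)
  qed
  then show ?thesis unfolding gauss_mech_def[abs_def] .
qed

lemma proj_alg_eq_bind:
  "proj_alg z sg D = (gauss_matrix :: ('d::finite \<times> 'k::finite \<Rightarrow> real) measure) \<bind>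
     (\<lambda>P. gauss_mech sg (transpose_apply P (\<Sum>x\<leftarrow>D. z x)) :: (real^'k) measure)"
  by (simp add: proj_alg_def proj_sum_eq_transpose_apply)

lemma sets_proj_alg:
  assumes "sg > 0"
  shows "sets (proj_alg z sg D :: (real^'k::finite) measure) = sets borel"
  unfolding proj_alg_eq_bind
  by (subst sets_bind) (auto intro: measurable_compose[OF _ measurable_gauss_mech[OF assms]])

lemma dp_proj_alg:
  fixes z :: "'x \<Rightarrow> real^'d::finite"
  assumes C: "C > 0" and Ct: "Ct \<ge> 0" and sg: "sg > 0" and delta: "0 \<le> delta"
    and sens: "dp_sens (gauss_mech sg :: real^'k::finite \<Rightarrow> (real^'k) measure) eps delta Ct"
    and gamma: "measure (gamma_measure (real CARD('k) / 2) (2 * C\<^sup>2 / real CARD('k))) {..Ct\<^sup>2} \<ge> 1 - delta'"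
    and rel: "\<And>D D'. rel D D' \<Longrightarrow> norm ((\<Sum>x\<leftarrow>D. z x) - (\<Sum>x\<leftarrow>D'. z x)) \<le> C"
  shows "dp (proj_alg z sg :: 'x list \<Rightarrow> (real^'k) measure) rel eps (delta + delta')"
  unfolding dp_def
proof (intro allI impI ballI)
  fix D D' E
  assume "rel D D'" and "E \<in> sets (proj_alg z sg D :: (real^'k) measure)"
  let ?M = "gauss_matrix :: ('d \<times> 'k \<Rightarrow> real) measure"
  interpret prob_space ?M by (rule prob_space_gauss_matrix)
  define v where "v = (\<Sum>x\<leftarrow>D. z x) - (\<Sum>x\<leftarrow>D'. z x)"
  define G where "G = {P :: 'd \<times> 'k \<Rightarrow> real. norm (transpose_apply P v) \<le> Ct}"
  have E: "E \<in> sets borel"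
    using \<open>E \<in> sets _\<close> by (simp add: sets_proj_alg[OF sg])
  have kernel: "(\<lambda>P. gauss_mech sg (transpose_apply P u) :: (real^'k) measure)
      \<in> measurable ?M (subprob_algebra borel)" for u
    by (rule measurable_compose[OF _ measurable_gauss_mech[OF sg]]) measurable
  have G_events: "G \<in> events"
  proof -
    have "G = (\<lambda>P. norm (transpose_apply P v)) -` {..Ct} \<inter> space ?M" by (auto simp: G_def)
    also have "\<dots> \<in> events" by measurable
    finally show ?thesis .
  qed
  have "measure (proj_alg z sg D) E
      \<le> exp eps * measure (proj_alg z sg D') E + delta + prob (space ?M - G)"
    unfolding proj_alg_eq_bind[where 'd='d]
  proof (rule measure_bind_le_mixture[OF kernel kernel E G_events _ delta])
    fix P assume "P \<in> G"
    then have "norm (transpose_apply P (\<Sum>x\<leftarrow>D. z x) - transpose_apply P (\<Sum>x\<leftarrow>D'. z x)) \<le> Ct"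
      by (simp add: G_def v_def linear_diff[OF linear_transpose_apply])
    then show "measure (gauss_mech sg (transpose_apply P (\<Sum>x\<leftarrow>D. z x))) E
        \<le> exp eps * measure (gauss_mech sg (transpose_apply P (\<Sum>x\<leftarrow>D'. z x))) E + delta"
      using sens E unfolding dp_sens_def by simp
  qed simp
  also have "prob (space ?M - G) \<le> delta'"
  proof -
    have "1 - delta' \<le> prob G"
      using gamma gamma_measure_le_measure_norm_transpose_apply[OF C Ct, of v, where 'k='k] rel[OF \<open>rel D D'\<close>]
      by (simp add: G_def v_def)
    then show ?thesis using prob_compl[OF G_events] by simp
  qed
  finally show "measure (proj_alg z sg D) E \<le> exp eps * measure (proj_alg z sg D') E + (delta + delta')"
    by simp
qed

lemma sum_list_remove_nth:
  fixes z :: "'x \<Rightarrow> 'a::ab_group_add"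
  assumes "i < length D"
  shows "(\<Sum>x\<leftarrow>D. z x) = (\<Sum>x\<leftarrow>take i D @ drop (Suc i) D. z x) + z (D ! i)"
proof -
  have "(\<Sum>x\<leftarrow>D. z x) = (\<Sum>x\<leftarrow>take i D @ D ! i # drop (Suc i) D. z x)"
    using id_take_nth_drop[OF assms] by simp
  then show ?thesis by (simp add: algebra_simps)
qed

lemma remadd_rel_norm_sum_list_diff:
  fixes z :: "'x \<Rightarrow> 'a::real_normed_vector"
  assumes "\<forall>x. norm (z x) \<le> C" and "remadd_rel D D'"
  shows "norm ((\<Sum>x\<leftarrow>D. z x) - (\<Sum>x\<leftarrow>D'. z x)) \<le> C"
  using assms(2) unfolding remadd_rel_def
proof (elim disjE exE conjE)
  fix i assume "i < length D" and "D' = take i D @ drop (Suc i) D"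
  then show ?thesis using sum_list_remove_nth[of i D z] assms(1) by simp
next
  fix i assume "i < length D'" and "D = take i D' @ drop (Suc i) D'"
  then show ?thesis using sum_list_remove_nth[of i D' z] assms(1) by (simp add: norm_minus_commute)
qed

lemma subst_rel_norm_sum_list_diff:
  fixes z :: "'x \<Rightarrow> 'a::real_normed_vector"
  assumes bound: "\<forall>x. norm (z x) \<le> C / 2" and "subst_rel D D'"
  shows "norm ((\<Sum>x\<leftarrow>D. z x) - (\<Sum>x\<leftarrow>D'. z x)) \<le> C"
proof -
  have len: "length D = length D'" and "card {i. i < length D \<and> D ! i \<noteq> D' ! i} = 1"
    using \<open>subst_rel D D'\<close> by (auto simp: subst_rel_def)
  then obtain i where i: "{i. i < length D \<and> D ! i \<noteq> D' ! i} = {i}"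
    by (auto simp: card_1_singleton_iff)
  then have i_lt: "i < length D" by auto
  have agree: "D ! n = D' ! n" if "n < length D" "n \<noteq> i" for n
    using i that by auto
  have "(\<Sum>x\<leftarrow>D. z x) - (\<Sum>x\<leftarrow>D'. z x) = (\<Sum>n\<in>{0..<length D}. z (D ! n) - z (D' ! n))"
    using len by (simp add: sum_list_sum_nth sum_subtractf)
  also have "\<dots> = (\<Sum>n\<in>{i}. z (D ! n) - z (D' ! n))"
    by (rule sum.mono_neutral_right) (use i_lt agree in auto)
  finally have "norm ((\<Sum>x\<leftarrow>D. z x) - (\<Sum>x\<leftarrow>D'. z x)) = norm (z (D ! i) - z (D' ! i))"
    by simp
  also have "\<dots> \<le> norm (z (D ! i)) + norm (z (D' ! i))"
    by (rule norm_triangle_ineq4)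
  also have "\<dots> \<le> C / 2 + C / 2"
    using bound by (intro add_mono) auto
  finally show ?thesis by simp
qed

theorem theorem2:
  fixes z :: "'x \<Rightarrow> real^'d"
    and C Ct sg eps delta delta' :: real
  assumes "C > 0" and "Ct > 0" and "sg > 0" and "eps > 0"
    and "0 \<le> delta" and "delta \<le> 1" and "delta' > 0"
    and "dp_sens (gauss_mech sg :: real^'k \<Rightarrow> (real^'k) measure) eps delta Ct"
    and "measure (gamma_measure (real CARD('k) / 2) (2 * C\<^sup>2 / real CARD('k))) {..Ct\<^sup>2}
           \<ge> 1 - delta'"
  shows "((\<forall>x. norm (z x) \<le> C) \<longrightarrow>
            dp (proj_alg z sg :: 'x list \<Rightarrow> (real^'k) measure) remadd_rel eps (delta + delta'))
       \<and> ((\<forall>x. norm (z x) \<le> C / 2) \<longrightarrow>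
            dp (proj_alg z sg :: 'x list \<Rightarrow> (real^'k) measure) subst_rel eps (delta + delta'))"
proof (intro conjI impI)
  assume "\<forall>x. norm (z x) \<le> C"
  then show "dp (proj_alg z sg :: 'x list \<Rightarrow> (real^'k) measure) remadd_rel eps (delta + delta')"
    by (intro dp_proj_alg[OF assms(1) less_imp_le[OF assms(2)] assms(3,5,8,9)] remadd_rel_norm_sum_list_diff)
next
  assume "\<forall>x. norm (z x) \<le> C / 2"
  then show "dp (proj_alg z sg :: 'x list \<Rightarrow> (real^'k) measure) subst_rel eps (delta + delta')"
    by (intro dp_proj_alg[OF assms(1) less_imp_le[OF assms(2)] assms(3,5,8,9)] subst_rel_norm_sum_list_diff)
qed

end
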